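(* Let $\vec{p}\in\Delta^n$ and let $\mathcal{D}=\mathrm{Mul}_k(\vec{p})$. Then $\mathcal{D}$ is $(k,\infty)$-explicitly bounded with variance proxy $8/k$; that is, for every even $s$ with $2\le s\le k$, $$\{v_i^2=1\ \forall i\in[n]\}\ \vdash_{s}\ \mathbb{E}_{Y\sim\mathcal{D}}\big[\langle Y-\vec{p},v\rangle^s\big]\le (8s/k)^{s/2},$$ where this is regarded as a polynomial inequality in the formal variables $v_1,\dots,v_n$.
   Context: $\Delta^n\subset\mathbb{R}^n$ is the simplex of nonnegative vectors with coordinates summing to 1. For $\vec{p}\in\Delta^n$, $\mathrm{Mul}_k(\vec{p})$ is the distribution of the frequency vector $Y\in\Delta^n$, $Y_j=\frac1k\#\{\nu\le k: Z_\nu=j\}$, where $Z_1,\dots,Z_k$ are i.i.d. draws from $\vec{p}$; its mean is $\vec{p}$. For polynomials in formal variables $v$, the notation $\{q_1=0,\dots,q_m=0\}\vdash_d f\ge 0$ (a degree-$d$ sum-of-squares proof) means there exist polynomials $s_1,\dots,s_m$ and a sum-of-squares polynomial $r$ such that $f=\sum_i s_iq_i + r$ with $\deg(s_iq_i)\le d$ for all $i$ and $\deg r\le d$. A distribution $\mathcal{D}$ on $\mathbb{R}^n$ with mean $\mu$ is $(t,\infty)$-explicitly bounded with variance proxy $\sigma$ if for every even $2\le s\le t$, $\{v_i^2=1\ \forall i\in[n]\}\vdash_s \mathbb{E}_{Y\sim\mathcal{D}}[\langle Y-\mu,v\rangle^s]\le(\sigma s)^{s/2}$. *)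

theory Defs
  imports "HOL-Analysis.Analysis" "HOL-Library.Poly_Mapping"
begin

text \<open>Real multivariate polynomials in the formal variables v_0, v_1, ... :
  a monomial is a finitely supported exponent vector (a finitely supported nat-to-nat map), a polynomial
  is a finitely supported map from monomials to real coefficients; the ring
  operations are those of Poly_Mapping (convolution product).\<close>

type_synonym mpoly = "(nat \<Rightarrow>\<^sub>0 nat) \<Rightarrow>\<^sub>0 real"

definition mvar :: "nat \<Rightarrow> mpoly" where
  "mvar i = Poly_Mapping.single (Poly_Mapping.single i 1) 1"

definition mconst :: "real \<Rightarrow> mpoly" where
  "mconst c = Poly_Mapping.single 0 c"

definition mon_deg :: "(nat \<Rightarrow>\<^sub>0 nat) \<Rightarrow> nat" where
  "mon_deg m = (\<Sum>i\<in>Poly_Mapping.keys m. Poly_Mapping.lookup m i)"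

text \<open>Total degree (degree of the zero polynomial taken to be 0).\<close>
definition total_deg :: "mpoly \<Rightarrow> nat" where
  "total_deg p = Max (insert 0 (mon_deg ` Poly_Mapping.keys p))"

definition is_sos :: "mpoly \<Rightarrow> bool" where
  "is_sos r \<longleftrightarrow> (\<exists>qs. r = (\<Sum>q\<leftarrow>qs. q * q))"

text \<open>Degree-d SoS proof: {q_1 = 0, ..., q_m = 0} \<turnstile>_d f \<ge> 0.\<close>
definition sos_proves :: "mpoly list \<Rightarrow> nat \<Rightarrow> mpoly \<Rightarrow> bool" where
  "sos_proves qs d f \<longleftrightarrow>
     (\<exists>ss r. length ss = length qs \<and>
        f = (\<Sum>i<length qs. ss ! i * qs ! i) + r \<and>
        (\<forall>i<length qs. total_deg (ss ! i * qs ! i) \<le> d) \<and>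
        is_sos r \<and> total_deg r \<le> d)"

text \<open>The Boolean constraints v_i^2 = 1 for i in [n] (variables indexed 0..n-1).\<close>
definition bool_axioms :: "nat \<Rightarrow> mpoly list" where
  "bool_axioms n = map (\<lambda>i. mvar i * mvar i - 1) [0..<n]"

definition prob_simplex :: "nat \<Rightarrow> (nat \<Rightarrow> real) set" where
  "prob_simplex n = {p. (\<forall>i<n. 0 \<le> p i) \<and> (\<Sum>i<n. p i) = 1}"

definition freq :: "nat \<Rightarrow> (nat \<Rightarrow> nat) \<Rightarrow> nat \<Rightarrow> real" where
  "freq k z j = real (card {\<nu>. \<nu> < k \<and> z \<nu> = j}) / real k"

text \<open>Expectation of a (polynomial-valued) function of Y ~ Mul_k(p): Y is the
  frequency vector of k i.i.d. draws Z_1..Z_k from p.\<close>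
definition mul_expect :: "nat \<Rightarrow> nat \<Rightarrow> (nat \<Rightarrow> real) \<Rightarrow> ((nat \<Rightarrow> real) \<Rightarrow> mpoly) \<Rightarrow> mpoly" where
  "mul_expect n k p F =
     (\<Sum>z\<in>{..<k} \<rightarrow>\<^sub>E {..<n}. mconst (\<Prod>\<nu><k. p (z \<nu>)) * F (freq k z))"

definition lin_form :: "nat \<Rightarrow> (nat \<Rightarrow> real) \<Rightarrow> mpoly" where
  "lin_form n a = (\<Sum>i<n. mconst (a i) * mvar i)"

end

(*
  Write m = <p, v> and X_i = v_i - m. If Y is the frequency vector of the draws Z_1, ..., Z_k,
  then <Y - p, v> = (1/k) * sum_nu X_(Z_nu), so its s-th power expands into
  k^-s * sum_t prod_j X_(Z_(t j)) over all maps t : [s] -> [k]. By independence of the draws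
  the expectation of a term vanishes as soon as some draw nu occurs exactly once in t, since
  E X_Z = sum_i p_i (v_i - m) = 0 identically in v; at most (k choose s/2) (s/2)^s maps have no
  such singleton fibre. Every remaining term is bounded by 2^s with a degree-s certificate:
  the axioms v_i^2 = 1 give 4 - X_i^2 >= 0 in degree 2, and an AM-GM step between two halves
  of the product lifts this to 2^s - prod_j X_(Z_(t j)) >= 0. Altogether the moment is at most
  k^-s 2^s (k choose s/2) (s/2)^s <= (8 s / k)^(s/2).
*)
theory Submission
  imports Defs
begin

section \<open>Counting maps without singleton fibres\<close>

lemma power_le_exp_mult_fact:
  fixes x :: real
  assumes "0 \<le> x"
  shows "x ^ h \<le> exp x * fact h"
proof -
  have "x ^ h / fact h \<le> exp x"
    using sum_le_suminf[OF summable_exp_generic[of x], of "{h}"] assms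
    by (simp add: exp_def divide_inverse mult.commute)
  then show ?thesis
    by (simp add: divide_le_eq)
qed

lemma power_self_le_three_power_fact: "real h ^ h \<le> 3 ^ h * fact h"
proof -
  have "real h ^ h \<le> exp 1 ^ h * fact h"
    using power_le_exp_mult_fact[of "real h" h] exp_of_nat_mult[of h "1::real"] by simp
  also have "\<dots> \<le> 3 ^ h * fact h"
    by (intro mult_right_mono power_mono exp_le) auto
  finally show ?thesis .
qed

lemma scaled_binomial_power_le:
  assumes "0 < k"
  shows "(1 / real k) ^ (2 * h) * 2 ^ (2 * h) * real ((k choose h) * h ^ (2 * h))
    \<le> (8 * real (2 * h) / real k) ^ h"
proof -
  have "real (k choose h) * real h ^ h \<le> real (k choose h) * (3 ^ h * fact h)"
    by (intro mult_left_mono power_self_le_three_power_fact) auto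
  also have "\<dots> = 3 ^ h * real ((k choose h) * fact h)"
    by simp
  also have "\<dots> \<le> 3 ^ h * real (k ^ h)"
    using binomial_fact_pow[of k h] by (intro mult_left_mono) (simp_all del: of_nat_mult of_nat_power)
  finally have binom: "real (k choose h) * real h ^ h \<le> 3 ^ h * real k ^ h"
    by simp
  have "(1 / real k) ^ (2 * h) * 2 ^ (2 * h) = ((1 / real k) ^ 2 * 2 ^ 2) ^ h"
    by (simp only: power_mult power_mult_distrib)
  then have scale: "(1 / real k) ^ (2 * h) * 2 ^ (2 * h) = (4 / real k ^ 2) ^ h"
    by (simp add: power_divide)
  have "(1 / real k) ^ (2 * h) * 2 ^ (2 * h) * real ((k choose h) * h ^ (2 * h))
      = (4 / real k ^ 2) ^ h * real h ^ h * (real (k choose h) * real h ^ h)"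
  proof -
    have "real ((k choose h) * h ^ (2 * h)) = real h ^ h * (real (k choose h) * real h ^ h)"
      by (simp add: mult_2 power_add)
    then show ?thesis
      by (simp only: scale mult.assoc)
  qed
  also have "\<dots> \<le> (4 / real k ^ 2) ^ h * real h ^ h * (3 ^ h * real k ^ h)"
    by (intro mult_left_mono binom) auto
  also have "\<dots> = (4 / real k ^ 2 * real h * (3 * real k)) ^ h"
    by (simp only: power_mult_distrib)
  also have "\<dots> = (12 * real h / real k) ^ h"
    using assms by (simp add: power2_eq_square)
  also have "\<dots> \<le> (8 * real (2 * h) / real k) ^ h"
    by (intro power_mono divide_right_mono) auto
  finally show ?thesis .
qed

lemma double_card_image_le_if_no_singleton_fibres:
  assumes "finite A" "\<And>y. y \<in> f ` A \<Longrightarrow> card {x \<in> A. f x = y} \<noteq> 1"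
  shows "2 * card (f ` A) \<le> card A"
proof -
  have "2 * card (f ` A) = (\<Sum>y\<in>f ` A. 2)"
    by simp
  also have "\<dots> \<le> (\<Sum>y\<in>f ` A. card {x \<in> A. f x = y})"
  proof (rule sum_mono)
    fix y assume y: "y \<in> f ` A"
    then have "card {x \<in> A. f x = y} \<noteq> 0"
      using assms(1) by auto
    then show "2 \<le> card {x \<in> A. f x = y}"
      using assms(2)[OF y] by linarith
  qed
  also have "\<dots> = card A"
    using sum.group[of A "f ` A" f "\<lambda>_. 1::nat"] assms(1) by simp
  finally show ?thesis .
qed

definition maps_without_singleton_fibres :: "nat \<Rightarrow> nat \<Rightarrow> (nat \<Rightarrow> nat) set" where
  "maps_without_singleton_fibres s k =
     {t \<in> {..<s} \<rightarrow>\<^sub>E {..<k}. \<forall>\<nu><k. card {j. j < s \<and> t j = \<nu>} \<noteq> 1}"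

lemma finite_maps_without_singleton_fibres: "finite (maps_without_singleton_fibres s k)"
  by (simp add: maps_without_singleton_fibres_def finite_PiE)

lemma maps_without_singleton_fibres_into_subset:
  assumes "t \<in> maps_without_singleton_fibres (2 * h) k" "h \<le> k"
  obtains A where "A \<subseteq> {..<k}" "card A = h" "t \<in> {..<2 * h} \<rightarrow>\<^sub>E A"
proof -
  let ?I = "t ` {..<2 * h}"
  have I: "?I \<subseteq> {..<k}"
    using assms(1) by (auto simp: maps_without_singleton_fibres_def)
  have "2 * card ?I \<le> 2 * h"
    using double_card_image_le_if_no_singleton_fibres[of "{..<2 * h}" t] assms(1) I
    by (auto simp: maps_without_singleton_fibres_def)
  moreover have "card ({..<k} - ?I) = k - card ?I"
    using I by (simp add: card_Diff_subset)
  ultimately obtain B where B: "B \<subseteq> {..<k} - ?I" "card B = h - card ?I"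
    using obtain_subset_with_card_n[of "h - card ?I" "{..<k} - ?I"] assms(2) by (metis diff_le_mono)
  then have "card (?I \<union> B) = h"
    using \<open>2 * card ?I \<le> 2 * h\<close> finite_subset[of B "{..<k}"]
    by (subst card_Un_disjoint) auto
  moreover have "?I \<union> B \<subseteq> {..<k}"
    using B(1) I by blast
  moreover have "t \<in> {..<2 * h} \<rightarrow>\<^sub>E ?I \<union> B"
    using assms(1) by (auto simp: maps_without_singleton_fibres_def)
  ultimately show ?thesis
    using that by blast
qed

lemma card_maps_without_singleton_fibres:
  assumes "h \<le> k"
  shows "card (maps_without_singleton_fibres (2 * h) k) \<le> (k choose h) * h ^ (2 * h)"
proof -
  let ?F = "{A. A \<subseteq> {..<k} \<and> card A = h}"
  have cover: "maps_without_singleton_fibres (2 * h) k \<subseteq> (\<Union>A\<in>?F. {..<2 * h} \<rightarrow>\<^sub>E A)"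
    using maps_without_singleton_fibres_into_subset[OF _ assms] by blast
  have finite_F: "finite ?F"
    by (rule finite_subset[of _ "Pow {..<k}"]) auto
  have "card (maps_without_singleton_fibres (2 * h) k) \<le> card (\<Union>A\<in>?F. {..<2 * h} \<rightarrow>\<^sub>E A)"
    using finite_F finite_subset[of _ "{..<k}"] by (intro card_mono[OF _ cover]) (auto intro: finite_PiE)
  also have "\<dots> \<le> (\<Sum>A\<in>?F. card ({..<2 * h} \<rightarrow>\<^sub>E A))"
    using finite_F by (rule card_UN_le)
  also have "\<dots> = (\<Sum>A\<in>?F. h ^ (2 * h))"
    by (intro sum.cong) (auto simp: card_PiE)
  also have "\<dots> = (k choose h) * h ^ (2 * h)"
    using n_subsets[of "{..<k}" h] by simp
  finally show ?thesis .
qed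

lemma scaled_card_maps_without_singleton_fibres_le:
  assumes "h \<le> k" "0 < k"
  shows "(1 / real k) ^ (2 * h) * 2 ^ (2 * h) * real (card (maps_without_singleton_fibres (2 * h) k))
    \<le> (8 * real (2 * h) / real k) ^ h"
proof -
  have "(1 / real k) ^ (2 * h) * 2 ^ (2 * h) * real (card (maps_without_singleton_fibres (2 * h) k))
      \<le> (1 / real k) ^ (2 * h) * 2 ^ (2 * h) * real ((k choose h) * h ^ (2 * h))"
    using card_maps_without_singleton_fibres[OF assms(1)] by (intro mult_left_mono of_nat_mono) simp_all
  also have "\<dots> \<le> (8 * real (2 * h) / real k) ^ h"
    using assms(2) by (rule scaled_binomial_power_le)
  finally show ?thesis .
qed

lemma mconst_0 [simp]: "mconst 0 = 0"
  by (simp add: mconst_def)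

lemma mconst_1 [simp]: "mconst 1 = 1"
  by (simp add: mconst_def)

lemma mconst_numeral [simp]: "mconst (numeral w) = numeral w"
  by (simp add: mconst_def)

lemma mconst_of_nat: "mconst (of_nat m) = of_nat m"
  by (simp add: mconst_def)

lemma mconst_add: "mconst (a + b) = mconst a + mconst b"
  by (simp add: mconst_def single_add)

lemma mconst_diff: "mconst (a - b) = mconst a - mconst b"
  by (simp add: mconst_def single_diff)

lemma mconst_uminus: "mconst (- a) = - mconst a"
  by (simp add: mconst_def single_uminus)

lemma mconst_mult: "mconst (a * b) = mconst a * mconst b"
  by (simp add: mconst_def mult_single)

lemma mconst_power: "mconst (a ^ m) = mconst a ^ m"
  by (induction m) (simp_all add: mconst_mult)

lemma mconst_sum: "mconst (\<Sum>x\<in>A. f x) = (\<Sum>x\<in>A. mconst (f x))"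
  by (induction A rule: infinite_finite_induct) (simp_all add: mconst_add)

lemma mconst_prod: "mconst (\<Prod>x\<in>A. f x) = (\<Prod>x\<in>A. mconst (f x))"
  by (induction A rule: infinite_finite_induct) (simp_all add: mconst_mult)

lemma total_deg_le_iff: "total_deg p \<le> d \<longleftrightarrow> (\<forall>m\<in>Poly_Mapping.keys p. mon_deg m \<le> d)"
  by (auto simp: total_deg_def)

lemma mon_deg_add: "mon_deg (a + b) = mon_deg a + mon_deg b"
proof -
  have sum_keys: "mon_deg m = (\<Sum>i\<in>S. Poly_Mapping.lookup m i)"
    if "finite S" "Poly_Mapping.keys m \<subseteq> S" for m S
    unfolding mon_deg_def using that by (intro sum.mono_neutral_left) (auto simp: in_keys_iff)
  let ?S = "Poly_Mapping.keys a \<union> Poly_Mapping.keys b"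
  have "mon_deg (a + b) = (\<Sum>i\<in>?S. Poly_Mapping.lookup (a + b) i)"
    using keys_add[of a b] by (intro sum_keys) auto
  also have "\<dots> = mon_deg a + mon_deg b"
    by (simp add: lookup_add sum.distrib sum_keys[of ?S a] sum_keys[of ?S b])
  finally show ?thesis .
qed

lemma total_deg_add_le: "total_deg p \<le> d \<Longrightarrow> total_deg q \<le> d \<Longrightarrow> total_deg (p + q) \<le> d"
  using keys_add[of p q] by (auto simp: total_deg_le_iff)

lemma total_deg_uminus [simp]: "total_deg (- p) = total_deg p"
  by (simp add: total_deg_def)

lemma total_deg_diff_le: "total_deg p \<le> d \<Longrightarrow> total_deg q \<le> d \<Longrightarrow> total_deg (p - q) \<le> d"
  using total_deg_add_le[of p d "- q"] by simp

lemma total_deg_mult_le: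
  "total_deg p \<le> d \<Longrightarrow> total_deg q \<le> e \<Longrightarrow> total_deg (p * q) \<le> d + e"
  using keys_mult[of p q] by (force simp: total_deg_le_iff mon_deg_add intro: add_mono)

lemma total_deg_0 [simp]: "total_deg 0 = 0"
  by (simp add: total_deg_def)

lemma total_deg_mconst [simp]: "total_deg (mconst c) = 0"
  by (simp add: total_deg_def mconst_def mon_deg_def)

lemma total_deg_1 [simp]: "total_deg 1 = 0"
  using total_deg_mconst[of 1] by simp

lemma total_deg_mvar: "total_deg (mvar i) \<le> 1"
  by (simp add: total_deg_le_iff mvar_def mon_deg_def)

lemma total_deg_sum_le: "(\<And>x. x \<in> A \<Longrightarrow> total_deg (f x) \<le> d) \<Longrightarrow> total_deg (\<Sum>x\<in>A. f x) \<le> d"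
  by (induction A rule: infinite_finite_induct) (auto intro: total_deg_add_le)

lemma total_deg_prod_le:
  "finite A \<Longrightarrow> (\<And>x. x \<in> A \<Longrightarrow> total_deg (f x) \<le> 1) \<Longrightarrow> total_deg (\<Prod>x\<in>A. f x) \<le> card A"
  by (induction A rule: finite_induct) (auto intro: total_deg_mult_le[of _ 1, simplified])

lemma total_deg_lin_form: "total_deg (lin_form n a) \<le> 1"
  unfolding lin_form_def
  by (intro total_deg_sum_le) (use total_deg_mult_le[OF _ total_deg_mvar, of "mconst _" 0] in simp)

section \<open>Sum-of-squares certificates\<close>

lemma is_sos_0 [simp]: "is_sos 0"
  unfolding is_sos_def by (rule exI[of _ "[]"]) simp

lemma is_sos_square: "is_sos (q\<^sup>2)"
  unfolding is_sos_def by (rule exI[of _ "[q]"]) (simp add: power2_eq_square)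

lemma is_sos_add: "is_sos a \<Longrightarrow> is_sos b \<Longrightarrow> is_sos (a + b)"
proof -
  assume "is_sos a" "is_sos b"
  then obtain qa qb where "a = (\<Sum>q\<leftarrow>qa. q * q)" "b = (\<Sum>q\<leftarrow>qb. q * q)"
    unfolding is_sos_def by blast
  then show ?thesis
    unfolding is_sos_def by (intro exI[of _ "qa @ qb"]) simp
qed

lemma is_sos_mult_square: "is_sos r \<Longrightarrow> is_sos (a\<^sup>2 * r)"
proof -
  have "a\<^sup>2 * (\<Sum>q\<leftarrow>qs. q * q) = (\<Sum>q\<leftarrow>map ((*) a) qs. q * q)" for qs
    by (induction qs) (simp_all add: power2_eq_square algebra_simps)
  then show "is_sos r \<Longrightarrow> is_sos (a\<^sup>2 * r)"
    unfolding is_sos_def by blast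
qed

lemma sos_provesE:
  assumes "sos_proves qs d f"
  obtains ss r where "length ss = length qs" "f = (\<Sum>i<length qs. ss ! i * qs ! i) + r"
    "\<And>i. i < length qs \<Longrightarrow> total_deg (ss ! i * qs ! i) \<le> d" "is_sos r" "total_deg r \<le> d"
  using assms unfolding sos_proves_def by blast

lemma sos_proves_mono: "sos_proves qs d f \<Longrightarrow> d \<le> e \<Longrightarrow> sos_proves qs e f"
  unfolding sos_proves_def by (blast intro: le_trans)

lemma sos_proves_square: "total_deg a \<le> e \<Longrightarrow> 2 * e \<le> d \<Longrightarrow> sos_proves qs d (a\<^sup>2)"
proof -
  assume "total_deg a \<le> e" "2 * e \<le> d"
  then have "total_deg (a\<^sup>2) \<le> d"
    using total_deg_mult_le[of a e a e] by (simp add: power2_eq_square)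
  then show ?thesis
    unfolding sos_proves_def
    by (intro exI[of _ "replicate (length qs) 0"] exI[of _ "a\<^sup>2"]) (simp add: is_sos_square)
qed

lemma sos_proves_0: "sos_proves qs d 0"
  using sos_proves_square[of 0 0 d] by simp

lemma sos_proves_add:
  assumes "sos_proves qs d f" "sos_proves qs d g"
  shows "sos_proves qs d (f + g)"
proof -
  obtain ss1 r1 where 1: "length ss1 = length qs" "f = (\<Sum>i<length qs. ss1 ! i * qs ! i) + r1"
    "\<And>i. i < length qs \<Longrightarrow> total_deg (ss1 ! i * qs ! i) \<le> d" "is_sos r1" "total_deg r1 \<le> d"
    using assms(1) by (rule sos_provesE) blast
  obtain ss2 r2 where 2: "length ss2 = length qs" "g = (\<Sum>i<length qs. ss2 ! i * qs ! i) + r2"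
    "\<And>i. i < length qs \<Longrightarrow> total_deg (ss2 ! i * qs ! i) \<le> d" "is_sos r2" "total_deg r2 \<le> d"
    using assms(2) by (rule sos_provesE) blast
  let ?ss = "map2 (+) ss1 ss2"
  show ?thesis
    unfolding sos_proves_def
  proof (intro exI[of _ ?ss] exI[of _ "r1 + r2"] conjI allI impI)
    show "f + g = (\<Sum>i<length qs. ?ss ! i * qs ! i) + (r1 + r2)"
      using 1(1,2) 2(1,2) by (simp add: algebra_simps sum.distrib)
    show "is_sos (r1 + r2)" "total_deg (r1 + r2) \<le> d"
      using 1 2 by (simp_all add: is_sos_add total_deg_add_le)
    fix i assume "i < length qs"
    then show "total_deg (?ss ! i * qs ! i) \<le> d"
      using 1(1,3) 2(1,3) by (simp add: distrib_right total_deg_add_le)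
  qed (simp add: 1(1) 2(1))
qed

lemma sos_proves_sum:
  "(\<And>x. x \<in> A \<Longrightarrow> sos_proves qs d (f x)) \<Longrightarrow> sos_proves qs d (\<Sum>x\<in>A. f x)"
  by (induction A rule: infinite_finite_induct) (auto intro: sos_proves_add sos_proves_0)

lemma sos_proves_mult_square:
  assumes "sos_proves qs d f" "total_deg a \<le> e"
  shows "sos_proves qs (d + 2 * e) (a\<^sup>2 * f)"
proof -
  obtain ss r where cert: "length ss = length qs" "f = (\<Sum>i<length qs. ss ! i * qs ! i) + r"
    "\<And>i. i < length qs \<Longrightarrow> total_deg (ss ! i * qs ! i) \<le> d" "is_sos r" "total_deg r \<le> d"
    using assms(1) by (rule sos_provesE) blast
  have deg_a2: "total_deg (a\<^sup>2 * g) \<le> d + 2 * e" if "total_deg g \<le> d" for g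
    using total_deg_mult_le[OF total_deg_mult_le[OF assms(2) assms(2)] that]
    by (simp add: power2_eq_square)
  show ?thesis
    unfolding sos_proves_def
  proof (intro exI[of _ "map ((*) (a\<^sup>2)) ss"] exI[of _ "a\<^sup>2 * r"] conjI allI impI)
    show "a\<^sup>2 * f = (\<Sum>i<length qs. map ((*) (a\<^sup>2)) ss ! i * qs ! i) + a\<^sup>2 * r"
      using cert(1,2) by (simp add: algebra_simps sum_distrib_left)
  qed (use cert deg_a2 in \<open>auto simp: mult.assoc intro: is_sos_mult_square\<close>)
qed

lemma sos_proves_mconst_mult: "sos_proves qs d f \<Longrightarrow> 0 \<le> c \<Longrightarrow> sos_proves qs d (mconst c * f)"
  using sos_proves_mult_square[of qs d f "mconst (sqrt c)" 0]
  by (simp add: power2_eq_square flip: mconst_mult)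

lemma sos_proves_mconst: "0 \<le> c \<Longrightarrow> sos_proves qs d (mconst c)"
  using sos_proves_mconst_mult[OF sos_proves_square[of 1 0 d], of c] by simp

lemma sos_proves_axiom_multiple:
  assumes "i < length qs" "total_deg (c * qs ! i) \<le> d"
  shows "sos_proves qs d (c * qs ! i)"
proof -
  let ?ss = "(replicate (length qs) 0)[i := c]"
  have "(\<Sum>j<length qs. ?ss ! j * qs ! j) = (\<Sum>j<length qs. if j = i then c * qs ! i else 0)"
    using assms(1) by (intro sum.cong) auto
  then have "c * qs ! i = (\<Sum>j<length qs. ?ss ! j * qs ! j) + 0"
    using assms(1) by simp
  then show ?thesis
    unfolding sos_proves_def using assms by (intro exI[of _ ?ss] exI[of _ 0]) (auto simp: nth_list_update)
qed

lemma sos_proves_mult_le_of_squares: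
  assumes "sos_proves qs d (C - a\<^sup>2)" "sos_proves qs d (C - b\<^sup>2)"
    and "total_deg a \<le> e" "total_deg b \<le> e" "2 * e \<le> d"
  shows "sos_proves qs d (C - a * b)"
proof -
  let ?H = "mconst (1/2)"
  have "?H * (a - b)\<^sup>2 + ?H * (C - a\<^sup>2) + ?H * (C - b\<^sup>2) = (?H + ?H) * (C - a * b)"
    by (simp add: power2_eq_square algebra_simps)
  then have "C - a * b = ?H * (a - b)\<^sup>2 + ?H * (C - a\<^sup>2) + ?H * (C - b\<^sup>2)"
    by (simp flip: mconst_add)
  also have "sos_proves qs d \<dots>"
    using assms by (intro sos_proves_add sos_proves_mconst_mult sos_proves_square total_deg_diff_le) auto
  finally show ?thesis .
qed

lemma sos_proves_prod_square_le:
  assumes "finite J" "\<And>j. j \<in> J \<Longrightarrow> total_deg (y j) \<le> 1"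
    and "\<And>j. j \<in> J \<Longrightarrow> sos_proves qs 2 (mconst (c\<^sup>2) - (y j)\<^sup>2)"
  shows "sos_proves qs (2 * card J) (mconst (c\<^sup>2 ^ card J) - (\<Prod>j\<in>J. y j)\<^sup>2)"
  using assms
proof (induction J rule: finite_induct)
  case empty
  then show ?case by (simp add: sos_proves_0)
next
  case (insert j J)
  let ?P = "\<Prod>j\<in>J. y j"
  have "mconst (c\<^sup>2 ^ card (insert j J)) - (\<Prod>j\<in>insert j J. y j)\<^sup>2
      = (mconst c)\<^sup>2 * (mconst (c\<^sup>2 ^ card J) - ?P\<^sup>2) + ?P\<^sup>2 * (mconst (c\<^sup>2) - (y j)\<^sup>2)"
    using insert.hyps by (simp add: mconst_mult mconst_power power2_eq_square algebra_simps)
  also have "sos_proves qs (2 * card (insert j J)) \<dots>"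
  proof (rule sos_proves_add)
    show "sos_proves qs (2 * card (insert j J)) ((mconst c)\<^sup>2 * (mconst (c\<^sup>2 ^ card J) - ?P\<^sup>2))"
    proof (rule sos_proves_mono)
      show "sos_proves qs (2 * card J + 2 * 0) ((mconst c)\<^sup>2 * (mconst (c\<^sup>2 ^ card J) - ?P\<^sup>2))"
        using insert by (intro sos_proves_mult_square insert.IH) auto
    qed (use insert.hyps in simp)
    show "sos_proves qs (2 * card (insert j J)) (?P\<^sup>2 * (mconst (c\<^sup>2) - (y j)\<^sup>2))"
      using sos_proves_mult_square[OF _ total_deg_prod_le, of qs 2 "mconst (c\<^sup>2) - (y j)\<^sup>2" J y] insert
      by (simp add: add.commute)
  qed
  finally show ?case .
qed

lemma sos_proves_prod_le:
  assumes "finite J" "card J = 2 * h" "\<And>j. j \<in> J \<Longrightarrow> total_deg (y j) \<le> 1"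
    and "\<And>j. j \<in> J \<Longrightarrow> sos_proves qs 2 (mconst (c\<^sup>2) - (y j)\<^sup>2)"
  shows "sos_proves qs (2 * h) (mconst (c ^ (2 * h)) - (\<Prod>j\<in>J. y j))"
proof -
  obtain J1 where J1: "J1 \<subseteq> J" "card J1 = h"
    using obtain_subset_with_card_n[of h J] assms(2) by auto
  let ?J2 = "J - J1"
  have J2: "?J2 \<subseteq> J" "card ?J2 = h"
    using J1 assms(1,2) by (auto simp: card_Diff_subset finite_subset)
  have half: "sos_proves qs (2 * h) (mconst (c\<^sup>2 ^ h) - (\<Prod>j\<in>I. y j)\<^sup>2)"
    and deg_half: "total_deg (\<Prod>j\<in>I. y j) \<le> h" if "I \<subseteq> J" "card I = h" for I
    using sos_proves_prod_square_le[of I y qs c] total_deg_prod_le[of I y] that assms(1,3,4)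
      finite_subset by fastforce+
  have "sos_proves qs (2 * h) (mconst (c\<^sup>2 ^ h) - (\<Prod>j\<in>J1. y j) * (\<Prod>j\<in>?J2. y j))"
    using J1 J2 by (intro sos_proves_mult_le_of_squares[of _ _ _ _ _ h] half deg_half) auto
  moreover have "(\<Prod>j\<in>J. y j) = (\<Prod>j\<in>J1. y j) * (\<Prod>j\<in>?J2. y j)"
    using J1(1) assms(1) by (simp add: prod.subset_diff mult.commute)
  ultimately show ?thesis
    by (simp add: power_mult)
qed

lemma sos_proves_const_sub_sum:
  assumes "finite T" "\<And>t. t \<in> T \<Longrightarrow> sos_proves qs d (mconst B - f t)"
    and "0 \<le> c" "c * B * real (card T) \<le> R"
  shows "sos_proves qs d (mconst R - mconst c * (\<Sum>t\<in>T. f t))"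
proof -
  have "mconst R - mconst c * (\<Sum>t\<in>T. f t)
      = mconst (R - c * B * real (card T)) + mconst c * (\<Sum>t\<in>T. mconst B - f t)"
    by (simp add: sum_subtractf mconst_diff mconst_mult mconst_of_nat algebra_simps)
  then show ?thesis
    using assms by (simp add: sos_proves_add sos_proves_mconst sos_proves_mconst_mult sos_proves_sum)
qed

section \<open>The Boolean hypercube\<close>

lemma sos_proves_bool_axiom:
  assumes "i < n"
  shows "sos_proves (bool_axioms n) 2 (mconst c * (1 - (mvar i)\<^sup>2))"
proof -
  have axiom: "bool_axioms n ! i = (mvar i)\<^sup>2 - 1"
    using assms by (simp add: bool_axioms_def power2_eq_square)
  have deg: "total_deg ((mvar i)\<^sup>2 - 1) \<le> 2"
    using total_deg_mult_le[OF total_deg_mvar total_deg_mvar, of i i]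
    by (intro total_deg_diff_le) (simp_all add: power2_eq_square)
  have "total_deg (mconst (- c) * bool_axioms n ! i) \<le> 2"
    using total_deg_mult_le[OF _ deg, of "mconst (- c)" 0] by (simp add: axiom)
  then have "sos_proves (bool_axioms n) 2 (mconst (- c) * bool_axioms n ! i)"
    using assms by (intro sos_proves_axiom_multiple) (simp_all add: bool_axioms_def)
  then show ?thesis
    by (simp add: axiom mconst_uminus algebra_simps)
qed

lemma double_sum_weighted_square_diff:
  fixes w x :: "'b \<Rightarrow> 'a::comm_ring_1"
  shows "(\<Sum>j\<in>A. \<Sum>l\<in>A. w j * w l * (x j - x l)\<^sup>2)
    = 2 * (\<Sum>j\<in>A. w j) * (\<Sum>j\<in>A. w j * (x j)\<^sup>2) - 2 * (\<Sum>j\<in>A. w j * x j)\<^sup>2"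
proof -
  have split: "w j * w l * (x j - x l)\<^sup>2
      = w j * (x j)\<^sup>2 * w l + w j * (w l * (x l)\<^sup>2) - 2 * (w j * x j * (w l * x l))" for j l
    by (simp add: power2_eq_square algebra_simps)
  have "(\<Sum>j\<in>A. \<Sum>l\<in>A. w j * w l * (x j - x l)\<^sup>2)
      = (\<Sum>j\<in>A. w j * (x j)\<^sup>2) * (\<Sum>l\<in>A. w l) + (\<Sum>j\<in>A. w j) * (\<Sum>l\<in>A. w l * (x l)\<^sup>2)
        - 2 * ((\<Sum>j\<in>A. w j * x j) * (\<Sum>l\<in>A. w l * x l))"
    by (simp only: split sum.distrib sum_subtractf sum_product flip: sum_distrib_left)
  then show ?thesis
    by (simp add: power2_eq_square algebra_simps)
qed

text \<open>The value of \<langle>e_Z - p, v\<rangle> on the draw Z = i.\<close>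
definition centered_var :: "nat \<Rightarrow> (nat \<Rightarrow> real) \<Rightarrow> nat \<Rightarrow> mpoly" where
  "centered_var n p i = mvar i - lin_form n p"

lemma total_deg_centered_var: "total_deg (centered_var n p i) \<le> 1"
  unfolding centered_var_def by (intro total_deg_diff_le total_deg_mvar total_deg_lin_form)

lemma sos_proves_centered_var_square_le:
  assumes p: "p \<in> prob_simplex n" and i: "i < n"
  shows "sos_proves (bool_axioms n) 2 (4 - (centered_var n p i)\<^sup>2)"
proof -
  let ?m = "lin_form n p"
  define A where "A = (\<Sum>j<n. mconst (p j) * (mvar j)\<^sup>2)"
  have weights: "(\<Sum>j<n. mconst (p j)) = 1"
    using p by (simp add: prob_simplex_def flip: mconst_sum)
  have bools: "(\<Sum>j<n. mconst (2 * p j) * (1 - (mvar j)\<^sup>2)) = 2 - 2 * A"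
  proof -
    have "(\<Sum>j<n. mconst (2 * p j) * (1 - (mvar j)\<^sup>2))
        = (\<Sum>j<n. 2 * mconst (p j) - 2 * (mconst (p j) * (mvar j)\<^sup>2))"
      by (simp add: mconst_mult algebra_simps)
    then show ?thesis
      by (simp add: sum_subtractf A_def weights flip: sum_distrib_left)
  qed
  have spread: "(\<Sum>j<n. \<Sum>l<n. mconst (p j * p l) * (mvar j - mvar l)\<^sup>2) = 2 * A - 2 * ?m\<^sup>2"
    using double_sum_weighted_square_diff[of "\<lambda>j. mconst (p j)" mvar "{..<n}"]
    by (simp add: A_def lin_form_def mconst_mult weights)
  \<comment> \<open>(v_i - m)^2 + (v_i + m)^2 = 2 v_i^2 + 2 m^2, and m^2 is at most the p-mean of the v_j^2.\<close>
  have "4 - (centered_var n p i)\<^sup>2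
      = (mvar i + ?m)\<^sup>2 + mconst 2 * (1 - (mvar i)\<^sup>2)
        + (\<Sum>j<n. mconst (2 * p j) * (1 - (mvar j)\<^sup>2))
        + (\<Sum>j<n. \<Sum>l<n. mconst (p j * p l) * (mvar j - mvar l)\<^sup>2)"
    unfolding bools spread centered_var_def by (simp add: power2_eq_square algebra_simps)
  also have "sos_proves (bool_axioms n) 2 \<dots>"
  proof (intro sos_proves_add)
    show "sos_proves (bool_axioms n) 2 ((mvar i + ?m)\<^sup>2)"
      by (intro sos_proves_square[of _ 1] total_deg_add_le total_deg_mvar total_deg_lin_form) simp
    show "sos_proves (bool_axioms n) 2 (mconst 2 * (1 - (mvar i)\<^sup>2))"
      using i by (rule sos_proves_bool_axiom)
    show "sos_proves (bool_axioms n) 2 (\<Sum>j<n. mconst (2 * p j) * (1 - (mvar j)\<^sup>2))"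
      by (intro sos_proves_sum sos_proves_bool_axiom) simp
    show "sos_proves (bool_axioms n) 2 (\<Sum>j<n. \<Sum>l<n. mconst (p j * p l) * (mvar j - mvar l)\<^sup>2)"
      using p unfolding prob_simplex_def
      by (intro sos_proves_sum sos_proves_mconst_mult sos_proves_square[of _ 1]
          total_deg_diff_le total_deg_mvar) auto
  qed
  finally show ?thesis .
qed

section \<open>Expectations over independent draws\<close>

text \<open>Expectation over the individual draws rather than their frequency vector:
  z \<nu> is the outcome of draw \<nu>.\<close>
definition draw_expect :: "nat \<Rightarrow> nat \<Rightarrow> (nat \<Rightarrow> real) \<Rightarrow> ((nat \<Rightarrow> nat) \<Rightarrow> mpoly) \<Rightarrow> mpoly" where
  "draw_expect n k p G = (\<Sum>z\<in>{..<k} \<rightarrow>\<^sub>E {..<n}. mconst (\<Prod>\<nu><k. p (z \<nu>)) * G z)"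

lemma mul_expect_eq_draw_expect: "mul_expect n k p F = draw_expect n k p (\<lambda>z. F (freq k z))"
  by (simp add: mul_expect_def draw_expect_def)

lemma draw_expect_cong:
  "(\<And>z. z \<in> {..<k} \<rightarrow>\<^sub>E {..<n} \<Longrightarrow> F z = G z) \<Longrightarrow> draw_expect n k p F = draw_expect n k p G"
  by (simp add: draw_expect_def)

lemma draw_expect_mult_left: "draw_expect n k p (\<lambda>z. c * G z) = c * draw_expect n k p G"
  by (simp add: draw_expect_def sum_distrib_left mult_ac)

lemma draw_expect_diff:
  "draw_expect n k p (\<lambda>z. F z - G z) = draw_expect n k p F - draw_expect n k p G"
  by (simp add: draw_expect_def right_diff_distrib sum_subtractf)

lemma draw_expect_sum:
  "draw_expect n k p (\<lambda>z. \<Sum>t\<in>T. G t z) = (\<Sum>t\<in>T. draw_expect n k p (G t))"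
  unfolding draw_expect_def sum_distrib_left by (rule sum.swap)

lemma draw_expect_const:
  assumes "p \<in> prob_simplex n"
  shows "draw_expect n k p (\<lambda>_. c) = c"
proof -
  have "(\<Sum>z\<in>{..<k} \<rightarrow>\<^sub>E {..<n}. \<Prod>\<nu><k. p (z \<nu>)) = (\<Prod>\<nu><k. \<Sum>i<n. p i)"
    by (rule prod_sum_PiE[symmetric]) auto
  then show ?thesis
    using assms by (simp add: draw_expect_def prob_simplex_def flip: sum_distrib_right mconst_sum)
qed

lemma sos_proves_draw_expect:
  assumes "p \<in> prob_simplex n" "\<And>z. z \<in> {..<k} \<rightarrow>\<^sub>E {..<n} \<Longrightarrow> sos_proves qs d (G z)"
  shows "sos_proves qs d (draw_expect n k p G)"
  unfolding draw_expect_def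
proof (intro sos_proves_sum sos_proves_mconst_mult)
  fix z assume z: "z \<in> {..<k} \<rightarrow>\<^sub>E {..<n}"
  then show "sos_proves qs d (G z)" by (rule assms(2))
  show "0 \<le> (\<Prod>\<nu><k. p (z \<nu>))"
    using assms(1) z by (intro prod_nonneg) (auto simp: prob_simplex_def)
qed

text \<open>This is where the independence of the draws enters.\<close>
lemma draw_expect_prod_factorizes:
  fixes s :: nat
  assumes t: "t \<in> {..<s} \<rightarrow>\<^sub>E {..<k}"
  shows "draw_expect n k p (\<lambda>z. \<Prod>j<s. f (z (t j)))
    = (\<Prod>\<nu><k. \<Sum>i<n. mconst (p i) * f i ^ card {j. j < s \<and> t j = \<nu>})"
proof -
  have "mconst (\<Prod>\<nu><k. p (z \<nu>)) * (\<Prod>j<s. f (z (t j)))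
      = (\<Prod>\<nu><k. mconst (p (z \<nu>)) * f (z \<nu>) ^ card {j. j < s \<and> t j = \<nu>})" for z
  proof -
    have img: "t ` {..<s} \<subseteq> {..<k}"
      using t by auto
    have "(\<Prod>j<s. f (z (t j))) = (\<Prod>\<nu><k. f (z \<nu>) ^ card {j. j < s \<and> t j = \<nu>})"
      using prod.group[of "{..<s}" "{..<k}" t "\<lambda>j. f (z (t j))"] img by simp
    then show ?thesis
      by (simp add: mconst_prod prod.distrib)
  qed
  then show ?thesis
    unfolding draw_expect_def by (simp add: prod_sum_PiE)
qed

lemma centered_var_mean_zero:
  assumes "p \<in> prob_simplex n"
  shows "(\<Sum>i<n. mconst (p i) * centered_var n p i) = 0"
proof -
  have "(\<Sum>i<n. mconst (p i) * centered_var n p i) = lin_form n p - (\<Sum>i<n. mconst (p i)) * lin_form n p"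
    by (simp add: centered_var_def lin_form_def right_diff_distrib sum_subtractf sum_distrib_right)
  then show ?thesis
    using assms by (simp add: prob_simplex_def flip: mconst_sum)
qed

lemma lin_form_freq_centered:
  assumes z: "z \<in> {..<k} \<rightarrow>\<^sub>E {..<n}" and k: "0 < k"
  shows "lin_form n (\<lambda>i. freq k z i - p i) = mconst (1 / real k) * (\<Sum>\<nu><k. centered_var n p (z \<nu>))"
proof -
  have counts: "(\<Sum>i<n. of_nat (card {\<nu>. \<nu> < k \<and> z \<nu> = i}) * mvar i) = (\<Sum>\<nu><k. mvar (z \<nu>))"
    using sum.group[of "{..<k}" "{..<n}" z "\<lambda>\<nu>. mvar (z \<nu>)"] z by auto
  have "(\<Sum>i<n. mconst (freq k z i) * mvar i)
      = mconst (1 / real k) * (\<Sum>i<n. of_nat (card {\<nu>. \<nu> < k \<and> z \<nu> = i}) * mvar i)"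
    unfolding freq_def sum_distrib_left
    by (intro sum.cong) (simp_all add: mconst_mult mconst_of_nat divide_inverse mult_ac)
  moreover have "lin_form n p = mconst (1 / real k) * (of_nat k * lin_form n p)"
    using k by (simp add: mult.assoc[symmetric] flip: mconst_of_nat mconst_mult)
  ultimately show ?thesis
    by (simp add: lin_form_def centered_var_def counts mconst_diff left_diff_distrib right_diff_distrib
        sum_subtractf)
qed

lemma draw_expect_centered_prod_eq_0:
  fixes s :: nat
  assumes p: "p \<in> prob_simplex n" and t: "t \<in> {..<s} \<rightarrow>\<^sub>E {..<k}"
    and "\<nu> < k" "card {j. j < s \<and> t j = \<nu>} = 1"
  shows "draw_expect n k p (\<lambda>z. \<Prod>j<s. centered_var n p (z (t j))) = 0"
proof -
  have "(\<Sum>i<n. mconst (p i) * centered_var n p i ^ card {j. j < s \<and> t j = \<nu>}) = 0"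
    using assms(4) centered_var_mean_zero[OF p] by simp
  then show ?thesis
    unfolding draw_expect_prod_factorizes[OF t] using assms(3) by (intro prod_zero) auto
qed

lemma mul_expect_lin_form_power:
  assumes "0 < k"
  shows "mul_expect n k p (\<lambda>Y. lin_form n (\<lambda>i. Y i - p i) ^ s)
    = mconst ((1 / real k) ^ s)
      * (\<Sum>t\<in>{..<s} \<rightarrow>\<^sub>E {..<k}. draw_expect n k p (\<lambda>z. \<Prod>j<s. centered_var n p (z (t j))))"
proof -
  have "lin_form n (\<lambda>i. freq k z i - p i) ^ s
      = mconst ((1 / real k) ^ s) * (\<Sum>t\<in>{..<s} \<rightarrow>\<^sub>E {..<k}. \<Prod>j<s. centered_var n p (z (t j)))"
    if "z \<in> {..<k} \<rightarrow>\<^sub>E {..<n}" for z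
  proof -
    have "(\<Sum>\<nu><k. centered_var n p (z \<nu>)) ^ s = (\<Prod>j<s. \<Sum>\<nu><k. centered_var n p (z \<nu>))"
      by simp
    also have "\<dots> = (\<Sum>t\<in>{..<s} \<rightarrow>\<^sub>E {..<k}. \<Prod>j<s. centered_var n p (z (t j)))"
      by (rule prod_sum_PiE) auto
    finally show ?thesis
      using lin_form_freq_centered[OF that assms] by (simp add: power_mult_distrib mconst_power)
  qed
  then have "mul_expect n k p (\<lambda>Y. lin_form n (\<lambda>i. Y i - p i) ^ s)
      = draw_expect n k p (\<lambda>z. mconst ((1 / real k) ^ s)
          * (\<Sum>t\<in>{..<s} \<rightarrow>\<^sub>E {..<k}. \<Prod>j<s. centered_var n p (z (t j))))"
    unfolding mul_expect_eq_draw_expect by (rule draw_expect_cong)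
  then show ?thesis
    by (simp add: draw_expect_mult_left draw_expect_sum)
qed

lemma mul_expect_lin_form_power_eq_sum_without_singletons:
  assumes "p \<in> prob_simplex n" "0 < k"
  shows "mul_expect n k p (\<lambda>Y. lin_form n (\<lambda>i. Y i - p i) ^ s)
    = mconst ((1 / real k) ^ s) * (\<Sum>t\<in>maps_without_singleton_fibres s k.
        draw_expect n k p (\<lambda>z. \<Prod>j<s. centered_var n p (z (t j))))"
  unfolding mul_expect_lin_form_power[OF assms(2)] maps_without_singleton_fibres_def
  using draw_expect_centered_prod_eq_0[OF assms(1)]
  by (intro arg_cong[where f = "(*) _"] sum.mono_neutral_right) (auto simp: finite_PiE)

lemma sos_proves_draw_expect_centered_prod_le:
  fixes s :: nat
  assumes p: "p \<in> prob_simplex n" and t: "t \<in> {..<s} \<rightarrow>\<^sub>E {..<k}" and s: "s = 2 * h"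
  shows "sos_proves (bool_axioms n) s
    (2 ^ s - draw_expect n k p (\<lambda>z. \<Prod>j<s. centered_var n p (z (t j))))"
proof -
  have "2 ^ s - draw_expect n k p (\<lambda>z. \<Prod>j<s. centered_var n p (z (t j)))
      = draw_expect n k p (\<lambda>z. 2 ^ s - (\<Prod>j<s. centered_var n p (z (t j))))"
    by (simp add: draw_expect_diff draw_expect_const[OF p])
  also have "sos_proves (bool_axioms n) s \<dots>"
  proof (rule sos_proves_draw_expect[OF p])
    fix z assume "z \<in> {..<k} \<rightarrow>\<^sub>E {..<n}"
    then have "z (t j) < n" if "j < s" for j
      using t that by auto
    then show "sos_proves (bool_axioms n) s (2 ^ s - (\<Prod>j<s. centered_var n p (z (t j))))"
      using sos_proves_prod_le[of "{..<s}" h "\<lambda>j. centered_var n p (z (t j))" "bool_axioms n" 2]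
        sos_proves_centered_var_square_le[OF p] total_deg_centered_var s
      by (simp add: mconst_power)
  qed
  finally show ?thesis .
qed

theorem lemma3p9:
  fixes n k s :: nat and p :: "nat \<Rightarrow> real"
  assumes "p \<in> prob_simplex n"
    and "even s" and "2 \<le> s" and "s \<le> k"
  shows "sos_proves (bool_axioms n) s
           (mconst ((8 * real s / real k) ^ (s div 2))
            - mul_expect n k p (\<lambda>Y. lin_form n (\<lambda>i. Y i - p i) ^ s))"
proof -
  define h where "h = s div 2"
  have s: "s = 2 * h" and k: "0 < k"
    using assms(2-4) by (auto simp: h_def)
  have count: "(1 / real k) ^ s * 2 ^ s * real (card (maps_without_singleton_fibres s k))
      \<le> (8 * real s / real k) ^ h"
    using scaled_card_maps_without_singleton_fibres_le[of h k] s assms(4) k by simp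
  have "sos_proves (bool_axioms n) s (mconst ((8 * real s / real k) ^ h)
      - mconst ((1 / real k) ^ s) * (\<Sum>t\<in>maps_without_singleton_fibres s k.
          draw_expect n k p (\<lambda>z. \<Prod>j<s. centered_var n p (z (t j)))))"
    using sos_proves_draw_expect_centered_prod_le[OF assms(1) _ s] count
    by (intro sos_proves_const_sub_sum[where B = "2 ^ s"] finite_maps_without_singleton_fibres)
      (auto simp: mconst_power maps_without_singleton_fibres_def)
  then show ?thesis
    unfolding mul_expect_lin_form_power_eq_sum_without_singletons[OF assms(1) k] h_def .
qed

end
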